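(* Let $V$ be an $n$-dimensional real vector space. (i) If $L\subset V\oplus V^*$ is a forward LD structure, there is a symmetric bilinear form $\Psi$ on $V$ such that the symmetric bilinear form $\langle\!\langle (v_1,\eta_1),(v_2,\eta_2)\rangle\!\rangle=\langle\eta_1|v_2\rangle+\langle\eta_2|v_1\rangle-2\Psi(v_1,v_2)$ on $V\oplus V^*$ is nondegenerate of signature $(n,n)$ and $L$ is maximally isotropic for it. (ii) If $L$ is a backward LD structure, there is a symmetric bilinear form $\Phi$ on $V^*$ such that $\langle\!\langle (v_1,\eta_1),(v_2,\eta_2)\rangle\!\rangle=\langle\eta_1|v_2\rangle+\langle\eta_2|v_1\rangle-2\Phi(\eta_1,\eta_2)$ is nondegenerate of signature $(n,n)$ and $L$ is maximally isotropic for it.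
   Context: $\rho,\rho^*$ are the projections of $V\oplus V^*$ onto $V,V^*$; $\langle\eta|v\rangle$ the natural pairing; $W^\circ$ the annihilator; $L\cap V=\{v:(v,0)\in L\}$, $L\cap V^*=\{\eta:(0,\eta)\in L\}$. A forward Leibniz–Dirac (LD) structure is a subspace $L\subset V\oplus V^*$ with $\rho(L)^{\circ}=L\cap V^*$; a backward LD structure is one with $\rho^*(L)^{\circ}=L\cap V$. *)

theory Defs
  imports "HOL-Analysis.Analysis"
begin

text \<open>Coordinate model: V = real^'n (n = CARD('n)), V* = real^'n, with the
natural pairing given by the standard dot product.  An element of
V \<oplus> V* is a pair (v, eta).\<close>

definition pairing :: "real^'n \<Rightarrow> real^'n \<Rightarrow> real" where
  "pairing eta v = eta \<bullet> v"

definition rho :: "((real^'n) \<times> (real^'n)) set \<Rightarrow> (real^'n) set" where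
  "rho L = fst ` L"

definition rho_star :: "((real^'n) \<times> (real^'n)) set \<Rightarrow> (real^'n) set" where
  "rho_star L = snd ` L"

definition ann_in_dual :: "(real^'n) set \<Rightarrow> (real^'n) set" where
  "ann_in_dual W = {eta. \<forall>v\<in>W. pairing eta v = 0}"

definition ann_in_V :: "(real^'n) set \<Rightarrow> (real^'n) set" where
  "ann_in_V W = {v. \<forall>eta\<in>W. pairing eta v = 0}"

definition cap_V :: "((real^'n) \<times> (real^'n)) set \<Rightarrow> (real^'n) set" where
  "cap_V L = {v. (v, 0) \<in> L}"

definition cap_Vstar :: "((real^'n) \<times> (real^'n)) set \<Rightarrow> (real^'n) set" where
  "cap_Vstar L = {eta. (0, eta) \<in> L}"

definition forward_LD :: "((real^'n) \<times> (real^'n)) set \<Rightarrow> bool" where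
  "forward_LD L \<longleftrightarrow> subspace L \<and> ann_in_dual (rho L) = cap_Vstar L"

definition backward_LD :: "((real^'n) \<times> (real^'n)) set \<Rightarrow> bool" where
  "backward_LD L \<longleftrightarrow> subspace L \<and> ann_in_V (rho_star L) = cap_V L"

definition sym_bilinear :: "('a::real_vector \<Rightarrow> 'a \<Rightarrow> real) \<Rightarrow> bool" where
  "sym_bilinear B \<longleftrightarrow> bilinear B \<and> (\<forall>x y. B x y = B y x)"

definition nondegenerate :: "('a::real_vector \<Rightarrow> 'a \<Rightarrow> real) \<Rightarrow> bool" where
  "nondegenerate B \<longleftrightarrow> (\<forall>x. (\<forall>y. B x y = 0) \<longrightarrow> x = 0)"

definition has_signature :: "('a::euclidean_space \<Rightarrow> 'a \<Rightarrow> real) \<Rightarrow> nat \<Rightarrow> nat \<Rightarrow> bool" where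
  "has_signature B p q \<longleftrightarrow>
     (\<exists>U. subspace U \<and> dim U = p \<and> (\<forall>x\<in>U. x \<noteq> 0 \<longrightarrow> B x x > 0)) \<and>
     (\<forall>U. subspace U \<and> (\<forall>x\<in>U. x \<noteq> 0 \<longrightarrow> B x x > 0) \<longrightarrow> dim U \<le> p) \<and>
     (\<exists>U. subspace U \<and> dim U = q \<and> (\<forall>x\<in>U. x \<noteq> 0 \<longrightarrow> B x x < 0)) \<and>
     (\<forall>U. subspace U \<and> (\<forall>x\<in>U. x \<noteq> 0 \<longrightarrow> B x x < 0) \<longrightarrow> dim U \<le> q)"

definition isotropic :: "('a::real_vector \<Rightarrow> 'a \<Rightarrow> real) \<Rightarrow> 'a set \<Rightarrow> bool" where
  "isotropic B L \<longleftrightarrow> (\<forall>x\<in>L. \<forall>y\<in>L. B x y = 0)"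

definition maximally_isotropic :: "('a::real_vector \<Rightarrow> 'a \<Rightarrow> real) \<Rightarrow> 'a set \<Rightarrow> bool" where
  "maximally_isotropic B L \<longleftrightarrow> subspace L \<and> isotropic B L \<and>
     (\<forall>M. subspace M \<and> isotropic B M \<and> L \<subseteq> M \<longrightarrow> M = L)"

definition fwd_form :: "(real^'n \<Rightarrow> real^'n \<Rightarrow> real) \<Rightarrow>
    ((real^'n) \<times> (real^'n)) \<Rightarrow> ((real^'n) \<times> (real^'n)) \<Rightarrow> real" where
  "fwd_form Psi x y = pairing (snd x) (fst y) + pairing (snd y) (fst x) - 2 * Psi (fst x) (fst y)"

definition bwd_form :: "(real^'n \<Rightarrow> real^'n \<Rightarrow> real) \<Rightarrow>
    ((real^'n) \<times> (real^'n)) \<Rightarrow> ((real^'n) \<times> (real^'n)) \<Rightarrow> real" where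
  "bwd_form Phi x y = pairing (snd x) (fst y) + pairing (snd y) (fst x) - 2 * Phi (snd x) (snd y)"

end

theory Submission
  imports Defs
begin

(* Let W = \<rho>(L) for a forward LD structure L, so that L \<inter> V* = W\<^sup>\<circ>.  Choosing a linear
   g : V \<rightarrow> V* whose graph over W lies in L, every element of L has the form
   (w, g w + a) with w \<in> W, a \<in> W\<^sup>\<circ>; we take \<Psi> to be the symmetrization of g.  Then
   - for ANY bilinear \<Psi>, the form fwd_form \<Psi> is nondegenerate of signature (n, n),
     witnessed by a positive and a negative definite graph of dimension n;
   - L is isotropic for it, and dim L = dim W + dim W\<^sup>\<circ> = n;
   - an isotropic subspace meets a positive-definite one only in 0, so an isotropic
     subspace of dimension n cannot be enlarged.
   Part (ii) reduces to part (i) by exchanging V and V*, which transforms backward LD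
   structures into forward ones and bwd_form into fwd_form; nondegeneracy, signature
   and maximal isotropy are invariant under such a linear change of variables. *)

lemma dim_add_le_if_trivial_intersection:
  fixes A B :: "'a::euclidean_space set"
  assumes "subspace A" "subspace B" "A \<inter> B \<subseteq> {0}"
  shows "dim A + dim B \<le> DIM('a)"
proof -
  have "dim A + dim B = dim {x + y |x y. x \<in> A \<and> y \<in> B} + dim (A \<inter> B)"
    using dim_sums_Int[OF assms(1,2)] by simp
  also have "dim (A \<inter> B) = 0"
    using assms(3) by simp
  finally show ?thesis
    using dim_subset_UNIV[of "{x + y |x y. x \<in> A \<and> y \<in> B}"] by simp
qed

lemma graph_subspace_dim:
  fixes h :: "'a::euclidean_space \<Rightarrow> 'b::euclidean_space"
  assumes "linear h"
  shows "subspace (range (\<lambda>x. (x, h x)))" "dim (range (\<lambda>x. (x, h x))) = DIM('a)"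
proof -
  have lin: "linear (\<lambda>x. (x, h x))"
    using assms by (intro linearI) (auto simp: linear_add linear_scale)
  show "subspace (range (\<lambda>x. (x, h x)))"
    by (rule linear_subspace_image[OF lin subspace_UNIV])
  have "dim (range (\<lambda>x. (x, h x))) = dim (UNIV :: 'a set)"
    by (rule dim_image_eq[OF lin]) (auto simp: inj_on_def)
  then show "dim (range (\<lambda>x. (x, h x))) = DIM('a)" by simp
qed

(* Every subspace of a product admits a linear section over its first projection:
   choose a lift on a basis of the projection and extend linearly. *)
lemma linear_section:
  fixes L :: "('a::real_vector \<times> 'b::real_vector) set"
  assumes "subspace L"
  obtains g where "linear g" "\<And>w. w \<in> fst ` L \<Longrightarrow> (w, g w) \<in> L"
proof -
  obtain B where B: "B \<subseteq> fst ` L" "independent B" "fst ` L \<subseteq> span B"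
    by (rule basis_exists[of "fst ` L"]) blast
  define f where "f b = (SOME eta. (b, eta) \<in> L)" for b
  have f: "(b, f b) \<in> L" if b: "b \<in> B" for b
  proof -
    obtain z where "z \<in> L" "b = fst z" using b B(1) by blast
    then have "(b, snd z) \<in> L" by simp
    then show ?thesis unfolding f_def by (rule someI)
  qed
  obtain g where g: "linear g" "\<forall>b\<in>B. g b = f b"
    using linear_independent_extend[OF B(2)] by blast
  have "linear (\<lambda>w. (w, g w))"
    using g(1) by (intro linearI) (simp_all add: linear_add linear_scale)
  from linear_subspace_vimage[OF this assms]
  have graph_subspace: "subspace {w. (w, g w) \<in> L}" by (simp add: vimage_def)
  have "span B \<subseteq> {w. (w, g w) \<in> L}"
    using f g(2) by (intro span_minimal[OF _ graph_subspace]) auto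
  with B(3) have "(w, g w) \<in> L" if w: "w \<in> fst ` L" for w
    using w by blast
  with g(1) show thesis by (rule that)
qed

lemma bilinear_inner_representation:
  fixes Psi :: "'a::euclidean_space \<Rightarrow> 'a \<Rightarrow> real"
  assumes "bilinear Psi"
  obtains h where "linear h" "\<And>x y. Psi x y = h x \<bullet> y"
proof
  define h where "h x = (\<Sum>b\<in>Basis. Psi x b *\<^sub>R b)" for x
  show "linear h"
    unfolding h_def using assms
    by (intro linearI) (simp_all add: bilinear_ladd bilinear_lmul sum.distrib scaleR_add_left
        scaleR_sum_right)
  show "Psi x y = h x \<bullet> y" for x y
  proof -
    have "linear (Psi x)" using assms by (simp add: bilinear_def)
    then have "Psi x y = (\<Sum>b\<in>Basis. Psi x b * (b \<bullet> y))"
      by (subst euclidean_representation[symmetric, of y])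
        (simp add: linear_sum linear_scale inner_commute mult.commute)
    then show ?thesis
      by (simp add: h_def inner_sum_left)
  qed
qed

lemma linear_swap: "linear (prod.swap :: 'a::real_vector \<times> 'b::real_vector \<Rightarrow> 'b \<times> 'a)"
  by (auto intro: linearI)

(* The
   signature is determined by these sets for B and for -B, which makes its
   invariance under a change of variables transparent. *)
definition definite_dims :: "('a::real_vector \<Rightarrow> 'a \<Rightarrow> real) \<Rightarrow> nat set" where
  "definite_dims B = {dim U |U. subspace U \<and> (\<forall>x\<in>U. x \<noteq> 0 \<longrightarrow> B x x > 0)}"

lemma has_signature_iff_definite_dims:
  fixes B :: "'a::euclidean_space \<Rightarrow> 'a \<Rightarrow> real"
  shows "has_signature B p q \<longleftrightarrow>
    p \<in> definite_dims B \<and> (\<forall>d \<in> definite_dims B. d \<le> p) \<and>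
    q \<in> definite_dims (\<lambda>x y. - B x y) \<and> (\<forall>d \<in> definite_dims (\<lambda>x y. - B x y). d \<le> q)"
  unfolding has_signature_def definite_dims_def by auto

lemma definite_dims_pullback:
  fixes B :: "'a::euclidean_space \<Rightarrow> 'a \<Rightarrow> real" and s :: "'a \<Rightarrow> 'a"
  assumes "linear s" "bij s"
  shows "definite_dims (\<lambda>x y. B (s x) (s y)) = definite_dims B"
proof -
  have inj: "inj s" and surj: "surj s" using assms(2) by (auto simp: bij_def)
  have dim_image: "dim (s ` U) = dim U" for U
    using dim_image_eq[OF assms(1)] inj by (auto simp: inj_on_def)
  have zero_iff: "s x = 0 \<longleftrightarrow> x = 0" for x
    using inj linear_0[OF assms(1)] by (metis injD)
  show ?thesis
  proof (intro subset_antisym subsetI)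
    fix d assume "d \<in> definite_dims (\<lambda>x y. B (s x) (s y))"
    then obtain U where U: "d = dim U" "subspace U" "\<forall>x\<in>U. x \<noteq> 0 \<longrightarrow> B (s x) (s x) > 0"
      by (auto simp: definite_dims_def)
    then have "subspace (s ` U)" "\<forall>y\<in>s ` U. y \<noteq> 0 \<longrightarrow> B y y > 0"
      using linear_subspace_image[OF assms(1)] zero_iff by auto
    moreover have "dim (s ` U) = d" using U(1) dim_image by simp
    ultimately show "d \<in> definite_dims B"
      unfolding definite_dims_def by blast
  next
    fix d assume "d \<in> definite_dims B"
    then obtain U where U: "d = dim U" "subspace U" "\<forall>x\<in>U. x \<noteq> 0 \<longrightarrow> B x x > 0"
      by (auto simp: definite_dims_def)
    have "s ` (s -` U) = U" using surj by (simp add: surj_image_vimage_eq)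
    then have "dim (s -` U) = d" using U(1) dim_image[of "s -` U"] by simp
    moreover have "subspace (s -` U)" using linear_subspace_vimage[OF assms(1) U(2)] .
    moreover have "\<forall>x\<in>s -` U. x \<noteq> 0 \<longrightarrow> B (s x) (s x) > 0" using U(3) zero_iff by auto
    ultimately show "d \<in> definite_dims (\<lambda>x y. B (s x) (s y))"
      unfolding definite_dims_def by blast
  qed
qed

lemma has_signature_pullback:
  fixes B :: "'a::euclidean_space \<Rightarrow> 'a \<Rightarrow> real" and s :: "'a \<Rightarrow> 'a"
  assumes "linear s" "bij s" "has_signature B p q"
  shows "has_signature (\<lambda>x y. B (s x) (s y)) p q"
  using assms(3) definite_dims_pullback[OF assms(1,2), of B]
    definite_dims_pullback[OF assms(1,2), of "\<lambda>x y. - B x y"]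
  by (simp add: has_signature_iff_definite_dims)

lemma nondegenerate_pullback:
  fixes B :: "'a::real_vector \<Rightarrow> 'a \<Rightarrow> real" and s :: "'a \<Rightarrow> 'a"
  assumes "linear s" "bij s" "nondegenerate B"
  shows "nondegenerate (\<lambda>x y. B (s x) (s y))"
  unfolding nondegenerate_def
proof (intro allI impI)
  fix x assume "\<forall>y. B (s x) (s y) = 0"
  then have "\<forall>y. B (s x) y = 0"
    using assms(2) by (metis bij_pointE)
  then have "s x = 0" using assms(3) by (simp add: nondegenerate_def)
  then show "x = 0"
    using assms(1,2) by (metis bij_pointE linear_0)
qed

lemma maximally_isotropic_pullback:
  fixes B :: "'a::real_vector \<Rightarrow> 'a \<Rightarrow> real" and s :: "'a \<Rightarrow> 'a"
  assumes "linear s" "inj s" "maximally_isotropic B (s ` L)"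
  shows "maximally_isotropic (\<lambda>x y. B (s x) (s y)) L"
proof -
  have iso_iff: "isotropic (\<lambda>x y. B (s x) (s y)) U \<longleftrightarrow> isotropic B (s ` U)" for U
    by (auto simp: isotropic_def)
  have "subspace (s -` (s ` L))"
    using assms(3) linear_subspace_vimage[OF assms(1)] by (simp add: maximally_isotropic_def)
  then have "subspace L" using assms(2) by (simp add: inj_vimage_image_eq)
  moreover have "isotropic (\<lambda>x y. B (s x) (s y)) L"
    using assms(3) iso_iff by (simp add: maximally_isotropic_def)
  moreover have "M = L"
    if "subspace M" "isotropic (\<lambda>x y. B (s x) (s y)) M" "L \<subseteq> M" for M
  proof -
    have "s ` M = s ` L"
      using assms(3) that linear_subspace_image[OF assms(1)] iso_iff
      unfolding maximally_isotropic_def by (metis image_mono)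
    then show "M = L" using assms(2) by (simp add: inj_image_eq_iff)
  qed
  ultimately show ?thesis unfolding maximally_isotropic_def by blast
qed

(* A positive-definite subspace of dimension p and a negative-definite one of
   dimension q with p + q = dim of the whole space determine the signature (p, q):
   any larger definite subspace would meet the opposite one nontrivially. *)
lemma has_signature_of_definite_subspaces:
  fixes B :: "'a::euclidean_space \<Rightarrow> 'a \<Rightarrow> real"
  assumes P: "subspace P" "dim P = p" "\<forall>x\<in>P. x \<noteq> 0 \<longrightarrow> B x x > 0"
    and N: "subspace N" "dim N = q" "\<forall>x\<in>N. x \<noteq> 0 \<longrightarrow> B x x < 0"
    and "p + q = DIM('a)"
  shows "has_signature B p q"
  unfolding has_signature_def
proof (intro conjI allI impI)
  show "\<exists>U. subspace U \<and> dim U = p \<and> (\<forall>x\<in>U. x \<noteq> 0 \<longrightarrow> B x x > 0)"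
    using P by blast
  show "\<exists>U. subspace U \<and> dim U = q \<and> (\<forall>x\<in>U. x \<noteq> 0 \<longrightarrow> B x x < 0)"
    using N by blast
next
  fix U assume U: "subspace U \<and> (\<forall>x\<in>U. x \<noteq> 0 \<longrightarrow> B x x > 0)"
  then have "U \<inter> N \<subseteq> {0}" using N(3) by force
  then show "dim U \<le> p"
    using dim_add_le_if_trivial_intersection[of U N] U N assms(7) by simp
next
  fix U assume U: "subspace U \<and> (\<forall>x\<in>U. x \<noteq> 0 \<longrightarrow> B x x < 0)"
  then have "U \<inter> P \<subseteq> {0}" using P(3) by force
  then show "dim U \<le> q"
    using dim_add_le_if_trivial_intersection[of U P] U P assms(7) by simp
qed

(* Dimension criterion for maximal isotropy: an isotropic subspace meets every
   positive-definite subspace P only in 0, so an isotropic L with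
   dim L + dim P = dim of the space cannot be enlarged. *)
lemma maximally_isotropic_of_dim:
  fixes B :: "'a::euclidean_space \<Rightarrow> 'a \<Rightarrow> real"
  assumes P: "subspace P" "\<forall>x\<in>P. x \<noteq> 0 \<longrightarrow> B x x > 0"
    and L: "subspace L" "isotropic B L" "dim L + dim P = DIM('a)"
  shows "maximally_isotropic B L"
  unfolding maximally_isotropic_def
proof (intro conjI allI impI L(1,2))
  fix M assume M: "subspace M \<and> isotropic B M \<and> L \<subseteq> M"
  have "M \<inter> P \<subseteq> {0}"
    using M P(2) by (force simp: isotropic_def)
  then have "dim M \<le> dim L"
    using dim_add_le_if_trivial_intersection[of M P] M P(1) L(3) by simp
  then show "M = L"
    using subspace_dim_equal[of L M] L(1) M by simp
qed

(* For any bilinear \<Psi>, the form fwd_form \<Psi> is nondegenerate: pairing (v, \<eta>)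
   against (0, v) gives |v|\<^sup>2 and then against (\<eta>, 0) gives |\<eta>|\<^sup>2. *)
lemma fwd_form_nondegenerate:
  fixes Psi :: "real^'n \<Rightarrow> real^'n \<Rightarrow> real"
  assumes "bilinear Psi"
  shows "nondegenerate (fwd_form Psi)"
  unfolding nondegenerate_def
proof (intro allI impI)
  fix z :: "(real^'n) \<times> (real^'n)"
  assume z: "\<forall>w. fwd_form Psi z w = 0"
  have "fst z = 0"
    using z[rule_format, of "(0, fst z)"] bilinear_rzero[OF assms]
    by (simp add: fwd_form_def pairing_def)
  moreover have "snd z = 0"
    using z[rule_format, of "(snd z, 0)"] bilinear_lzero[OF assms] \<open>fst z = 0\<close>
    by (simp add: fwd_form_def pairing_def)
  ultimately show "z = 0" by (simp add: prod_eq_iff)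
qed

(* Writing \<Psi> x y = h x \<bullet> y, the form fwd_form \<Psi> equals 2|x|\<^sup>2 on the graph of
   x \<mapsto> x + h x and -2|x|\<^sup>2 on the graph of x \<mapsto> h x - x; both graphs have dimension n. *)
lemma fwd_form_definite_subspaces:
  fixes Psi :: "real^'n \<Rightarrow> real^'n \<Rightarrow> real"
  assumes "bilinear Psi"
  obtains P N where
    "subspace P" "dim P = CARD('n)" "\<forall>z\<in>P. z \<noteq> 0 \<longrightarrow> fwd_form Psi z z > 0"
    "subspace N" "dim N = CARD('n)" "\<forall>z\<in>N. z \<noteq> 0 \<longrightarrow> fwd_form Psi z z < 0"
proof -
  obtain h where h: "linear h" "\<And>x y. Psi x y = h x \<bullet> y"
    using bilinear_inner_representation[OF assms] by blast
  have diag: "fwd_form Psi (x, eta) (x, eta) = 2 * (eta \<bullet> x) - 2 * (h x \<bullet> x)" for x eta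
    by (simp add: fwd_form_def pairing_def h(2))
  have lin: "linear (\<lambda>x. x + h x)" "linear (\<lambda>x. h x - x)"
    using h(1) by (auto intro!: linearI simp: linear_add linear_scale algebra_simps)
  have h0: "h 0 = 0" using linear_0[OF h(1)] .
  show thesis
  proof
    show "subspace (range (\<lambda>x. (x, x + h x)))" "dim (range (\<lambda>x. (x, x + h x))) = CARD('n)"
      using graph_subspace_dim[OF lin(1)] by simp_all
    show "subspace (range (\<lambda>x. (x, h x - x)))" "dim (range (\<lambda>x. (x, h x - x))) = CARD('n)"
      using graph_subspace_dim[OF lin(2)] by simp_all
    show "\<forall>z\<in>range (\<lambda>x. (x, x + h x)). z \<noteq> 0 \<longrightarrow> fwd_form Psi z z > 0"
      using h0 by (auto simp: diag inner_add_left zero_prod_def)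
    show "\<forall>z\<in>range (\<lambda>x. (x, h x - x)). z \<noteq> 0 \<longrightarrow> fwd_form Psi z z < 0"
      using h0 by (auto simp: diag inner_diff_left zero_prod_def)
  qed
qed

lemma fwd_form_signature:
  fixes Psi :: "real^'n \<Rightarrow> real^'n \<Rightarrow> real"
  assumes "bilinear Psi"
  shows "has_signature (fwd_form Psi) CARD('n) CARD('n)"
proof -
  obtain P N where
    "subspace P" "dim P = CARD('n)" "\<forall>z\<in>P. z \<noteq> 0 \<longrightarrow> fwd_form Psi z z > 0"
    "subspace N" "dim N = CARD('n)" "\<forall>z\<in>N. z \<noteq> 0 \<longrightarrow> fwd_form Psi z z < 0"
    using fwd_form_definite_subspaces[OF assms] .
  moreover have "CARD('n) + CARD('n) = DIM((real^'n) \<times> (real^'n))" by simp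
  ultimately show ?thesis by (rule has_signature_of_definite_subspaces)
qed

lemma dim_annihilator:
  fixes W :: "(real^'n) set"
  assumes "subspace W"
  shows "subspace (ann_in_dual W)" "dim W + dim (ann_in_dual W) = CARD('n)"
proof -
  have ann_eq: "ann_in_dual W = {eta \<in> UNIV. \<forall>v\<in>W. orthogonal v eta}"
    by (auto simp: ann_in_dual_def pairing_def orthogonal_def inner_commute)
  show "subspace (ann_in_dual W)"
    unfolding ann_eq using subspace_orthogonal_to_vectors by simp
  show "dim W + dim (ann_in_dual W) = CARD('n)"
    using dim_subspace_orthogonal_to_vectors[OF assms subspace_UNIV] by (simp add: ann_eq)
qed

(* Structure of a forward LD structure L with W = \<rho>(L): given any map g whose graph
   over W lies in L, the elements of L are exactly the pairs (w, g w + a) with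
   w \<in> W and a \<in> W\<^sup>\<circ>, since L \<inter> V* = W\<^sup>\<circ>. *)
lemma forward_LD_decomposition:
  fixes L :: "((real^'n) \<times> (real^'n)) set" and g :: "real^'n \<Rightarrow> real^'n"
  assumes "forward_LD L" and graph_in_L: "\<And>w. w \<in> rho L \<Longrightarrow> (w, g w) \<in> L"
  shows "z \<in> L \<longleftrightarrow> fst z \<in> rho L \<and> snd z - g (fst z) \<in> ann_in_dual (rho L)"
proof -
  have subL: "subspace L" and ann: "ann_in_dual (rho L) = cap_Vstar L"
    using assms(1) by (auto simp: forward_LD_def)
  have split: "z = (fst z, g (fst z)) + (0, snd z - g (fst z))" by simp
  show ?thesis
  proof
    assume z: "z \<in> L"
    then have fst_z: "fst z \<in> rho L" by (simp add: rho_def)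
    have "z - (fst z, g (fst z)) \<in> L"
      using subspace_diff[OF subL z graph_in_L[OF fst_z]] .
    also have "z - (fst z, g (fst z)) = (0, snd z - g (fst z))" by (simp add: prod_eq_iff)
    finally have "(0, snd z - g (fst z)) \<in> L" .
    with fst_z show "fst z \<in> rho L \<and> snd z - g (fst z) \<in> ann_in_dual (rho L)"
      by (simp add: ann cap_Vstar_def)
  next
    assume "fst z \<in> rho L \<and> snd z - g (fst z) \<in> ann_in_dual (rho L)"
    then have "(fst z, g (fst z)) \<in> L" "(0, snd z - g (fst z)) \<in> L"
      using graph_in_L by (auto simp: ann cap_Vstar_def)
    then show "z \<in> L"
      using subspace_add[OF subL] split by metis
  qed
qed

lemma forward_LD_eq_sum:
  fixes L :: "((real^'n) \<times> (real^'n)) set" and g :: "real^'n \<Rightarrow> real^'n"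
  assumes "forward_LD L" and graph_in_L: "\<And>w. w \<in> rho L \<Longrightarrow> (w, g w) \<in> L"
  shows "L = {x + y |x y. x \<in> (\<lambda>w. (w, g w)) ` rho L \<and> y \<in> Pair 0 ` ann_in_dual (rho L)}"
proof (intro set_eqI iffI)
  fix z assume "z \<in> L"
  then have "fst z \<in> rho L" "snd z - g (fst z) \<in> ann_in_dual (rho L)"
    using forward_LD_decomposition[OF assms] by auto
  moreover have "z = (fst z, g (fst z)) + (0, snd z - g (fst z))" by simp
  ultimately show "z \<in> {x + y |x y. x \<in> (\<lambda>w. (w, g w)) ` rho L \<and> y \<in> Pair 0 ` ann_in_dual (rho L)}"
    by blast
next
  fix z assume "z \<in> {x + y |x y. x \<in> (\<lambda>w. (w, g w)) ` rho L \<and> y \<in> Pair 0 ` ann_in_dual (rho L)}"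
  then obtain w a where "w \<in> rho L" "a \<in> ann_in_dual (rho L)" "z = (w, g w + a)"
    by auto
  then show "z \<in> L"
    using forward_LD_decomposition[OF assms] by simp
qed

(* A forward LD structure has dimension n: the sum above is direct, and its two
   summands have dimensions dim W and dim W\<^sup>\<circ> = n - dim W. *)
lemma forward_LD_dim:
  fixes L :: "((real^'n) \<times> (real^'n)) set"
  assumes "forward_LD L"
  shows "dim L = CARD('n)"
proof -
  have subL: "subspace L" using assms by (simp add: forward_LD_def)
  obtain g where g: "linear g" "\<And>w. w \<in> rho L \<Longrightarrow> (w, g w) \<in> L"
    using linear_section[OF subL] by (auto simp: rho_def)
  define W where "W = rho L"
  define G where "G = (\<lambda>w. (w, g w)) ` W"
  define K where "K = Pair (0 :: real^'n) ` ann_in_dual W"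
  have subW: "subspace W"
    unfolding W_def rho_def by (rule linear_subspace_image[OF linear_fst subL])
  have lin_graph: "linear (\<lambda>w. (w, g w))" and lin_Pair: "linear (Pair (0 :: real^'n))"
    using g(1) by (auto intro!: linearI simp: linear_add linear_scale)
  have sub: "subspace G" "subspace K"
    unfolding G_def K_def using dim_annihilator(1)[OF subW]
    by (auto intro!: linear_subspace_image lin_graph lin_Pair subW)
  have dims: "dim G = dim W" "dim K = dim (ann_in_dual W)"
    unfolding G_def K_def by (auto intro!: dim_image_eq lin_graph lin_Pair simp: inj_on_def)
  have L_eq: "L = {x + y |x y. x \<in> G \<and> y \<in> K}"
    using forward_LD_eq_sum[OF assms g(2)] by (simp add: G_def K_def W_def)
  have "dim (G \<inter> K) = 0"
    using linear_0[OF g(1)] by (auto simp: G_def K_def zero_prod_def)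
  then have "dim L = dim W + dim (ann_in_dual W)"
    using dim_sums_Int[OF sub] dims unfolding L_eq by linarith
  also have "\<dots> = CARD('n)"
    using dim_annihilator(2)[OF subW] .
  finally show ?thesis .
qed

definition symmetrized_form :: "('a::real_inner \<Rightarrow> 'a) \<Rightarrow> 'a \<Rightarrow> 'a \<Rightarrow> real" where
  "symmetrized_form g x y = (g x \<bullet> y + g y \<bullet> x) / 2"

lemma sym_bilinear_symmetrized_form:
  assumes "linear g"
  shows "sym_bilinear (symmetrized_form g)"
  unfolding sym_bilinear_def bilinear_def symmetrized_form_def
  using assms
  by (auto intro!: linearI simp: linear_add linear_scale inner_add_left inner_add_right
      add_divide_distrib algebra_simps)

(* If the graph of g over \<rho>(L) lies in L, then L is isotropic for fwd_form of
   the symmetrization of g: the defect terms lie in W\<^sup>\<circ> and pair to zero with W. *)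
lemma forward_LD_isotropic:
  fixes L :: "((real^'n) \<times> (real^'n)) set" and g :: "real^'n \<Rightarrow> real^'n"
  assumes "forward_LD L" and graph_in_L: "\<And>w. w \<in> rho L \<Longrightarrow> (w, g w) \<in> L"
  shows "isotropic (fwd_form (symmetrized_form g)) L"
  unfolding isotropic_def
proof (intro ballI)
  fix z w assume "z \<in> L" "w \<in> L"
  then have "fst z \<in> rho L" "snd z - g (fst z) \<in> ann_in_dual (rho L)"
    "fst w \<in> rho L" "snd w - g (fst w) \<in> ann_in_dual (rho L)"
    using forward_LD_decomposition[OF assms] by blast+
  then have "(snd z - g (fst z)) \<bullet> fst w = 0" "(snd w - g (fst w)) \<bullet> fst z = 0"
    by (auto simp: ann_in_dual_def pairing_def)
  then show "fwd_form (symmetrized_form g) z w = 0"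
    by (simp add: fwd_form_def symmetrized_form_def pairing_def inner_diff_left)
qed

(* Part (i): \<Psi> is the symmetrization of a linear section of L.  Maximality
   follows from the dimension criterion, since dim L = n. *)
lemma forward_LD_maximally_isotropic:
  fixes L :: "((real^'n) \<times> (real^'n)) set"
  assumes "forward_LD L"
  shows "\<exists>Psi. sym_bilinear Psi \<and> nondegenerate (fwd_form Psi) \<and>
           has_signature (fwd_form Psi) CARD('n) CARD('n) \<and> maximally_isotropic (fwd_form Psi) L"
proof -
  have subL: "subspace L" using assms by (simp add: forward_LD_def)
  obtain g where g: "linear g" "\<And>w. w \<in> rho L \<Longrightarrow> (w, g w) \<in> L"
    using linear_section[OF subL] by (auto simp: rho_def)
  show ?thesis
  proof (intro exI conjI)
    show "sym_bilinear (symmetrized_form g)"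
      using sym_bilinear_symmetrized_form[OF g(1)] .
    then have bil: "bilinear (symmetrized_form g)" by (simp add: sym_bilinear_def)
    show "nondegenerate (fwd_form (symmetrized_form g))"
      using fwd_form_nondegenerate[OF bil] .
    show "has_signature (fwd_form (symmetrized_form g)) CARD('n) CARD('n)"
      using fwd_form_signature[OF bil] .
    obtain P where P: "subspace P" "dim P = CARD('n)"
        "\<forall>z\<in>P. z \<noteq> 0 \<longrightarrow> fwd_form (symmetrized_form g) z z > 0"
      by (rule fwd_form_definite_subspaces[OF bil])
    have "dim L + dim P = DIM((real^'n) \<times> (real^'n))"
      using forward_LD_dim[OF assms] P(2) by simp
    with P(1,3) subL forward_LD_isotropic[OF assms g(2)]
    show "maximally_isotropic (fwd_form (symmetrized_form g)) L"
      by (rule maximally_isotropic_of_dim)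
  qed
qed

lemma backward_LD_swap:
  fixes L :: "((real^'n) \<times> (real^'n)) set"
  assumes "backward_LD L"
  shows "forward_LD (prod.swap ` L)"
proof -
  have "subspace (prod.swap ` L)"
    using assms by (intro linear_subspace_image[OF linear_swap]) (simp add: backward_LD_def)
  moreover have "rho (prod.swap ` L) = rho_star L" "cap_Vstar (prod.swap ` L) = cap_V L"
    by (force simp: rho_def rho_star_def cap_Vstar_def cap_V_def)+
  moreover have "ann_in_dual W = ann_in_V W" for W :: "(real^'n) set"
    by (auto simp: ann_in_dual_def ann_in_V_def pairing_def inner_commute)
  ultimately show ?thesis
    using assms by (simp add: forward_LD_def backward_LD_def)
qed

lemma bwd_form_swap: "bwd_form Phi x y = fwd_form Phi (prod.swap x) (prod.swap y)"
  by (simp add: bwd_form_def fwd_form_def pairing_def inner_commute)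

lemma backward_LD_maximally_isotropic:
  fixes L :: "((real^'n) \<times> (real^'n)) set"
  assumes "backward_LD L"
  shows "\<exists>Phi. sym_bilinear Phi \<and> nondegenerate (bwd_form Phi) \<and>
           has_signature (bwd_form Phi) CARD('n) CARD('n) \<and> maximally_isotropic (bwd_form Phi) L"
proof -
  obtain Psi where Psi: "sym_bilinear Psi" "nondegenerate (fwd_form Psi)"
      "has_signature (fwd_form Psi) CARD('n) CARD('n)"
      "maximally_isotropic (fwd_form Psi) (prod.swap ` L)"
    using forward_LD_maximally_isotropic[OF backward_LD_swap[OF assms]] by blast
  show ?thesis
    unfolding bwd_form_swap
  proof (intro exI conjI)
    show "sym_bilinear Psi" by (fact Psi(1))
    show "nondegenerate (\<lambda>x y. fwd_form Psi (prod.swap x) (prod.swap y))"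
      using nondegenerate_pullback[OF linear_swap bij_swap Psi(2)] .
    show "has_signature (\<lambda>x y. fwd_form Psi (prod.swap x) (prod.swap y)) CARD('n) CARD('n)"
      using has_signature_pullback[OF linear_swap bij_swap Psi(3)] .
    show "maximally_isotropic (\<lambda>x y. fwd_form Psi (prod.swap x) (prod.swap y)) L"
      using maximally_isotropic_pullback[OF linear_swap inj_swap Psi(4)] .
  qed
qed

theorem proposition2p9:
  fixes L :: "((real^'n) \<times> (real^'n)) set"
  shows "(forward_LD L \<longrightarrow>
            (\<exists>Psi. sym_bilinear Psi \<and> nondegenerate (fwd_form Psi) \<and>
                  has_signature (fwd_form Psi) CARD('n) CARD('n) \<and>
                  maximally_isotropic (fwd_form Psi) L)) \<and>
         (backward_LD L \<longrightarrow>
            (\<exists>Phi. sym_bilinear Phi \<and> nondegenerate (bwd_form Phi) \<and>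
                  has_signature (bwd_form Phi) CARD('n) CARD('n) \<and>
                  maximally_isotropic (bwd_form Phi) L))"
  using forward_LD_maximally_isotropic backward_LD_maximally_isotropic by blast

end
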